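(* Let $K$ be finite with $|K|\ge2$, let $f^{\mathcal{W}}:\mathcal{P}^n\to 2^K$ be a voting by committees, and let $i\in N$. Then $S\in V_i$ if and only if there is $k^\star\in K$ such that either (i) $k^\star\in S$ and $i\in\bigcap_{M\in\mathcal{W}_{k^\star}}M$, or (ii) $k^\star\notin S$ and $\{i\}\in\mathcal{W}_{k^\star}$.
   Context: $N=\{1,\dots,n\}$, $n\ge2$; alternatives are subsets of $K$; $\mathcal{P}$ all strict linear orders on $2^K$; $t(P_i)$ the top of $P_i$. A committee for $k$ is a non-empty set $\mathcal{W}_k$ of non-empty subsets of $N$ closed under supersets. $f^{\mathcal{W}}$: $k\in f^{\mathcal{W}}(P)$ iff $\{j\in N:k\in t(P_j)\}\in\mathcal{W}_k$. Option set $O(P_i)=\{f^{\mathcal{W}}(P_i,P_{-i}):P_{-i}\in\mathcal{P}^{n-1}\}$. Agent $i$ vetoes $S\in 2^K$ via $P_i$ if $S\notin O(P_i)$; $V_i$ is the set of alternatives $i$ vetoes via some preference. *)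

theory Defs
  imports Main
begin

text \<open>A preference is a relation R on Pow K; (S, T) \<in> R means S is strictly
  preferred to T.\<close>

definition agents :: "nat \<Rightarrow> nat set" where
  "agents n = {1..n}"

definition prefs :: "'a set \<Rightarrow> ('a set \<times> 'a set) set set" where
  "prefs K = {R. R \<subseteq> Pow K \<times> Pow K \<and> strict_linear_order_on (Pow K) R}"

definition top_pref :: "'a set \<Rightarrow> ('a set \<times> 'a set) set \<Rightarrow> 'a set" where
  "top_pref K R = (THE S. S \<in> Pow K \<and> (\<forall>T \<in> Pow K. T \<noteq> S \<longrightarrow> (S, T) \<in> R))"

definition committee :: "nat \<Rightarrow> nat set set \<Rightarrow> bool" where
  "committee n Wk \<longleftrightarrow> Wk \<noteq> {} \<and>
     (\<forall>M \<in> Wk. M \<noteq> {} \<and> M \<subseteq> agents n) \<and>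
     (\<forall>M M'. M \<in> Wk \<longrightarrow> M \<subseteq> M' \<longrightarrow> M' \<subseteq> agents n \<longrightarrow> M' \<in> Wk)"

definition voting_by_committees :: "nat \<Rightarrow> 'a set \<Rightarrow> ('a \<Rightarrow> nat set set) \<Rightarrow> bool" where
  "voting_by_committees n K W \<longleftrightarrow> (\<forall>k \<in> K. committee n (W k))"

definition profile :: "nat \<Rightarrow> 'a set \<Rightarrow> (nat \<Rightarrow> ('a set \<times> 'a set) set) \<Rightarrow> bool" where
  "profile n K P \<longleftrightarrow> (\<forall>j \<in> agents n. P j \<in> prefs K)"

definition fW :: "nat \<Rightarrow> 'a set \<Rightarrow> ('a \<Rightarrow> nat set set)
    \<Rightarrow> (nat \<Rightarrow> ('a set \<times> 'a set) set) \<Rightarrow> 'a set" where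
  "fW n K W P = {k \<in> K. {j \<in> agents n. k \<in> top_pref K (P j)} \<in> W k}"

definition option_set :: "nat \<Rightarrow> 'a set \<Rightarrow> ('a \<Rightarrow> nat set set) \<Rightarrow> nat
    \<Rightarrow> ('a set \<times> 'a set) set \<Rightarrow> 'a set set" where
  "option_set n K W i R = {fW n K W (Q(i := R)) | Q. profile n K Q}"

definition vetoes :: "nat \<Rightarrow> 'a set \<Rightarrow> ('a \<Rightarrow> nat set set) \<Rightarrow> nat \<Rightarrow> 'a set set" where
  "vetoes n K W i = {S \<in> Pow K. \<exists>R \<in> prefs K. S \<notin> option_set n K W i R}"

end

theory Submission
  imports Defs
begin

text \<open>An agent i can force k out of the outcome exactly when i belongs to every winning
  coalition for k (announce a top without k), and can force k in exactly when {i} is winning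
  for k (announce the top K). If neither is possible for any k, then whatever i announces,
  the others can all announce S: for k \<in> S the coalition N - {i} is then winning, and for
  k \<notin> S the coalition is {} or {i}, neither of which is winning.\<close>

lemma prefs_with_top:
  assumes "finite K" "A \<subseteq> K"
  shows "\<exists>R \<in> prefs K. top_pref K R = A"
proof -
  obtain g :: "'a set \<Rightarrow> nat" where g: "inj_on g (Pow K)"
    using finite_imp_inj_to_nat_seg[of "Pow K"] assms(1) by auto
  define rank where "rank = (\<lambda>x. if x = A then 0 else Suc (g x))"
  have rank: "inj_on rank (Pow K)" using g unfolding rank_def inj_on_def by auto
  define R where "R = {(x, y). x \<in> Pow K \<and> y \<in> Pow K \<and> rank x < rank y}"
  have "R \<in> prefs K"
    unfolding prefs_def strict_linear_order_on_def R_def trans_def irrefl_def total_on_def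
    using inj_on_eq_iff[OF rank] by (auto simp: linorder_neq_iff)
  moreover have "top_pref K R = A"
    unfolding top_pref_def
  proof (rule the_equality)
    show "A \<in> Pow K \<and> (\<forall>T\<in>Pow K. T \<noteq> A \<longrightarrow> (A, T) \<in> R)"
      using assms(2) by (auto simp: R_def rank_def)
  next
    fix S assume S: "S \<in> Pow K \<and> (\<forall>T\<in>Pow K. T \<noteq> S \<longrightarrow> (S, T) \<in> R)"
    show "S = A"
    proof (rule ccontr)
      assume "S \<noteq> A"
      then have "(S, A) \<in> R" using S assms(2) by auto
      then show False by (auto simp: R_def rank_def)
    qed
  qed
  ultimately show ?thesis by blast
qed

lemma voting_by_committees_committee:
  assumes "voting_by_committees n K W" "k \<in> K"
  shows "committee n (W k)"
  using assms unfolding voting_by_committees_def by blast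

lemma committee_empty_not_mem:
  assumes "committee n Wk"
  shows "{} \<notin> Wk"
  using assms unfolding committee_def by blast

lemma committee_upward_closed:
  assumes "committee n Wk" "M \<in> Wk" "M \<subseteq> M'" "M' \<subseteq> agents n"
  shows "M' \<in> Wk"
  using assms unfolding committee_def by blast

lemma committee_agents_mem:
  assumes "committee n Wk"
  shows "agents n \<in> Wk"
proof -
  obtain M where M: "M \<in> Wk" using assms unfolding committee_def by blast
  with assms have "M \<subseteq> agents n" unfolding committee_def by blast
  with committee_upward_closed[OF assms M] show ?thesis by blast
qed

lemma committee_agents_minus_mem_iff:
  assumes "committee n Wk" "i \<in> agents n"
  shows "agents n - {i} \<in> Wk \<longleftrightarrow> i \<notin> \<Inter>Wk"
proof
  assume "i \<notin> \<Inter>Wk"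
  then obtain M where M: "M \<in> Wk" "i \<notin> M" by blast
  with assms(1) have "M \<subseteq> agents n - {i}" unfolding committee_def by blast
  with committee_upward_closed[OF assms(1) M(1)] show "agents n - {i} \<in> Wk" by blast
qed blast

lemma not_mem_fW_if_veto_player:
  assumes "i \<in> \<Inter>(W k)" "k \<notin> top_pref K (P i)"
  shows "k \<notin> fW n K W P"
  using assms unfolding fW_def by blast

lemma mem_fW_if_singleton_winning:
  assumes "committee n (W k)" "k \<in> K" "i \<in> agents n" "{i} \<in> W k" "k \<in> top_pref K (P i)"
  shows "k \<in> fW n K W P"
proof -
  have "{i} \<subseteq> {j \<in> agents n. k \<in> top_pref K (P j)}" using assms(3,5) by blast
  with committee_upward_closed[OF assms(1,4)] assms(2) show ?thesis
    unfolding fW_def by blast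
qed

lemma coalition_others_unanimous:
  assumes "i \<in> agents n" "\<And>j. j \<in> agents n \<Longrightarrow> j \<noteq> i \<Longrightarrow> top_pref K (P j) = S"
  shows "{j \<in> agents n. k \<in> top_pref K (P j)} =
    (if k \<in> S then agents n - {i} else {}) \<union> (if k \<in> top_pref K (P i) then {i} else {})"
  using assms by auto

lemma fW_eq_if_others_unanimous:
  assumes vbc: "voting_by_committees n K W" and "S \<subseteq> K" and i: "i \<in> agents n"
    and others: "\<And>j. j \<in> agents n \<Longrightarrow> j \<noteq> i \<Longrightarrow> top_pref K (P j) = S"
    and no_veto: "\<And>k. k \<in> S \<Longrightarrow> i \<notin> \<Inter>(W k)"
    and no_force: "\<And>k. k \<in> K - S \<Longrightarrow> {i} \<notin> W k"
  shows "fW n K W P = S"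
proof -
  have "{j \<in> agents n. k \<in> top_pref K (P j)} \<in> W k \<longleftrightarrow> k \<in> S" if k: "k \<in> K" for k
  proof -
    have com: "committee n (W k)" using vbc k by (rule voting_by_committees_committee)
    note coalition = coalition_others_unanimous[OF i others, where k = k]
    show ?thesis
    proof (cases "k \<in> S")
      case True
      have "agents n - {i} \<in> W k"
        using no_veto[OF True] committee_agents_minus_mem_iff[OF com i] by blast
      moreover have "agents n - {i} \<union> {i} = agents n" using i by blast
      ultimately show ?thesis using coalition True committee_agents_mem[OF com] by auto
    next
      case False
      have "{i} \<notin> W k" using no_force k False by blast
      then show ?thesis using coalition False committee_empty_not_mem[OF com] by auto
    qed
  qed
  with \<open>S \<subseteq> K\<close> show ?thesis unfolding fW_def by blast
qed

lemma mem_option_set_if_not_decisive: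
  assumes "voting_by_committees n K W" "finite K" "S \<subseteq> K" "i \<in> agents n"
    and "\<And>k. k \<in> S \<Longrightarrow> i \<notin> \<Inter>(W k)"
    and "\<And>k. k \<in> K - S \<Longrightarrow> {i} \<notin> W k"
  shows "S \<in> option_set n K W i R"
proof -
  obtain RS where RS: "RS \<in> prefs K" "top_pref K RS = S"
    using prefs_with_top[OF assms(2,3)] by blast
  have "profile n K (\<lambda>_. RS)" using RS(1) unfolding profile_def by blast
  moreover have "fW n K W ((\<lambda>_. RS)(i := R)) = S"
    by (rule fW_eq_if_others_unanimous[OF assms(1,3,4) _ assms(5,6)]) (simp add: RS(2))
  ultimately show ?thesis unfolding option_set_def by blast
qed

lemma mem_vetoesI:
  assumes "finite K" "S \<subseteq> K" "A \<subseteq> K"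
    and "\<And>P. top_pref K (P i) = A \<Longrightarrow> fW n K W P \<noteq> S"
  shows "S \<in> vetoes n K W i"
proof -
  obtain R where R: "R \<in> prefs K" "top_pref K R = A" using prefs_with_top[OF assms(1,3)] by blast
  have "S \<notin> option_set n K W i R"
  proof
    assume "S \<in> option_set n K W i R"
    then obtain Q where "S = fW n K W (Q(i := R))" unfolding option_set_def by blast
    with assms(4)[of "Q(i := R)"] R(2) show False by simp
  qed
  with R(1) assms(2) show ?thesis unfolding vetoes_def by blast
qed

theorem lemma3:
  fixes n :: nat and K :: "'a set" and W :: "'a \<Rightarrow> nat set set"
    and i :: nat and S :: "'a set"
  assumes "n \<ge> 2"
    and "finite K" and "card K \<ge> 2"
    and "voting_by_committees n K W"
    and "i \<in> agents n"
    and "S \<subseteq> K"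
  shows "S \<in> vetoes n K W i \<longleftrightarrow>
    (\<exists>k \<in> K. (k \<in> S \<and> i \<in> \<Inter>(W k)) \<or> (k \<notin> S \<and> {i} \<in> W k))"
proof
  assume "S \<in> vetoes n K W i"
  then obtain R where vetoed: "S \<notin> option_set n K W i R" unfolding vetoes_def by blast
  show "\<exists>k \<in> K. (k \<in> S \<and> i \<in> \<Inter>(W k)) \<or> (k \<notin> S \<and> {i} \<in> W k)"
  proof (rule ccontr)
    assume none: "\<not> ?thesis"
    have "S \<in> option_set n K W i R"
      by (rule mem_option_set_if_not_decisive[OF assms(4,2,6,5)]) (use none assms(6) in blast)+
    with vetoed show False ..
  qed
next
  assume "\<exists>k \<in> K. (k \<in> S \<and> i \<in> \<Inter>(W k)) \<or> (k \<notin> S \<and> {i} \<in> W k)"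
  then obtain k where k: "k \<in> K" and "(k \<in> S \<and> i \<in> \<Inter>(W k)) \<or> (k \<notin> S \<and> {i} \<in> W k)"
    by blast
  then consider "k \<in> S" "i \<in> \<Inter>(W k)" | "k \<notin> S" "{i} \<in> W k" by blast
  then show "S \<in> vetoes n K W i"
  proof cases
    case 1
    show ?thesis
    proof (rule mem_vetoesI[OF assms(2,6), of "{}"])
      fix P assume "top_pref K (P i) = {}"
      with 1 not_mem_fW_if_veto_player[of i W k K P n] show "fW n K W P \<noteq> S" by auto
    qed simp
  next
    case 2
    have com: "committee n (W k)" using assms(4) k by (rule voting_by_committees_committee)
    show ?thesis
    proof (rule mem_vetoesI[OF assms(2,6), of K])
      fix P assume "top_pref K (P i) = K"
      with 2 k mem_fW_if_singleton_winning[where W = W and k = k and P = P, OF com k assms(5)]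
      show "fW n K W P \<noteq> S" by auto
    qed simp
  qed
qed

end
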